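(* Let $(G,M,\Delta)$ be a Garside structure, $(H,N,\delta)$ a parabolic substructure, and $T$ the set of $(H,N)$-reduced elements of $G$. Put $\omega=\delta^{-1}\Delta$ and $\Phi(\alpha)=\Delta\alpha\Delta^{-1}$. Let $\theta\in T\setminus M$ with right $\Delta$-form $\theta=c\Delta^{-p}$, $p\ge1$, and let $\beta\in H\setminus N$ with right $\delta$-form $\beta=b\delta^{-k}$, $k\ge1$ (that is, $b\in N$ and $\delta\not\le_L b$). Then the right $\Delta$-form of $\beta\theta$ is $\beta\theta=\big(b\,\omega_1\cdots\omega_k\,\Phi^{-k}(c)\big)\Delta^{-k-p}$, where $\omega_i=\Phi^{-i+1}(\omega)$ for $i\in\{1,\dots,k\}$.
   Context: Let $G$ be a group and $M$ a submonoid with $M\cap M^{-1}=\{1\}$. Define $\alpha\le_L\beta$ iff $\alpha^{-1}\beta\in M$, and $\alpha\le_R\beta$ iff $\beta\alpha^{-1}\in M$. For $a\in M$ let $\mathrm{Div}_L(a)=\{b\in M: b\le_L a\}$, $\mathrm{Div}_R(a)=\{b\in M: b\le_R a\}$; $a$ is balanced if these coincide, and then $\mathrm{Div}(a)$ denotes this set. $M$ is Noetherian if each $a\in M$ admits an $n$ such that $a$ is not a product of more than $n$ non-trivial factors. A Garside structure $(G,M,\Delta)$: $\Delta\in M$ balanced, $M$ Noetherian, $\mathrm{Div}(\Delta)$ finite and generating $M$ as a monoid and $G$ as a group, $(G,\le_L)$ a lattice with meet $\wedge_L$. A parabolic substructure $(H,N,\delta)$: $\delta\in M$ balanced, $H$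 (resp. $N$) the subgroup (resp. submonoid) generated by $\mathrm{Div}(\delta)$, and $\mathrm{Div}(\delta)=\mathrm{Div}(\Delta)\cap N$; it is assumed $H\ne\{1\}$. $a\in M$ is unmovable if $\Delta\not\le_L a$; every $\alpha\in G$ has a unique right $\Delta$-form $\alpha=a\Delta^p$ ($a\in M$ unmovable, $p\in\mathbb Z$); analogously each $\beta\in H$ has a unique right $\delta$-form $\beta=b\delta^{q}$ with $b\in N$, $\delta\not\le_L b$, $q\in\mathbb Z$. $a\in M$ is $N$-reduced if $a\wedge_L\delta=1$. $\alpha$ with right $\Delta$-form $a\Delta^p$ is $(H,N)$-reduced if $a$ is $N$-reduced and either $p=0$, or $p<0$ and $\omega\not\le_L a$. *)

theory Defs
  imports "HOL-Algebra.Generated_Groups"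
begin

definition pointed_submonoid :: "('a, 'b) monoid_scheme \<Rightarrow> 'a set \<Rightarrow> bool" where
  "pointed_submonoid G M \<longleftrightarrow> M \<subseteq> carrier G \<and> \<one>\<^bsub>G\<^esub> \<in> M
     \<and> (\<forall>x\<in>M. \<forall>y\<in>M. x \<otimes>\<^bsub>G\<^esub> y \<in> M)
     \<and> {x \<in> M. inv\<^bsub>G\<^esub> x \<in> M} = {\<one>\<^bsub>G\<^esub>}"

definition leL :: "('a, 'b) monoid_scheme \<Rightarrow> 'a set \<Rightarrow> 'a \<Rightarrow> 'a \<Rightarrow> bool" where
  "leL G M x y \<longleftrightarrow> inv\<^bsub>G\<^esub> x \<otimes>\<^bsub>G\<^esub> y \<in> M"

definition leR :: "('a, 'b) monoid_scheme \<Rightarrow> 'a set \<Rightarrow> 'a \<Rightarrow> 'a \<Rightarrow> bool" where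
  "leR G M x y \<longleftrightarrow> y \<otimes>\<^bsub>G\<^esub> inv\<^bsub>G\<^esub> x \<in> M"

definition DivL :: "('a, 'b) monoid_scheme \<Rightarrow> 'a set \<Rightarrow> 'a \<Rightarrow> 'a set" where
  "DivL G M a = {b \<in> M. leL G M b a}"

definition DivR :: "('a, 'b) monoid_scheme \<Rightarrow> 'a set \<Rightarrow> 'a \<Rightarrow> 'a set" where
  "DivR G M a = {b \<in> M. leR G M b a}"

definition balanced :: "('a, 'b) monoid_scheme \<Rightarrow> 'a set \<Rightarrow> 'a \<Rightarrow> bool" where
  "balanced G M a \<longleftrightarrow> a \<in> M \<and> DivL G M a = DivR G M a"

abbreviation Div :: "('a, 'b) monoid_scheme \<Rightarrow> 'a set \<Rightarrow> 'a \<Rightarrow> 'a set" where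
  "Div G M a \<equiv> DivL G M a"

definition lprod :: "('a, 'b) monoid_scheme \<Rightarrow> 'a list \<Rightarrow> 'a" where
  "lprod G xs = foldr (\<lambda>x y. x \<otimes>\<^bsub>G\<^esub> y) xs \<one>\<^bsub>G\<^esub>"

definition noetherian :: "('a, 'b) monoid_scheme \<Rightarrow> 'a set \<Rightarrow> bool" where
  "noetherian G M \<longleftrightarrow> (\<forall>a\<in>M. \<exists>n::nat. \<forall>xs. set xs \<subseteq> M - {\<one>\<^bsub>G\<^esub>} \<and> lprod G xs = a
        \<longrightarrow> length xs \<le> n)"

inductive_set mgenerate :: "('a, 'b) monoid_scheme \<Rightarrow> 'a set \<Rightarrow> 'a set"
  for G and S where
    one: "\<one>\<^bsub>G\<^esub> \<in> mgenerate G S"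
  | incl: "s \<in> S \<Longrightarrow> s \<in> mgenerate G S"
  | mult: "x \<in> mgenerate G S \<Longrightarrow> y \<in> mgenerate G S \<Longrightarrow> x \<otimes>\<^bsub>G\<^esub> y \<in> mgenerate G S"

definition is_glbL :: "('a, 'b) monoid_scheme \<Rightarrow> 'a set \<Rightarrow> 'a \<Rightarrow> 'a \<Rightarrow> 'a \<Rightarrow> bool" where
  "is_glbL G M x y z \<longleftrightarrow> z \<in> carrier G \<and> leL G M z x \<and> leL G M z y
     \<and> (\<forall>w\<in>carrier G. leL G M w x \<and> leL G M w y \<longrightarrow> leL G M w z)"

definition is_lubL :: "('a, 'b) monoid_scheme \<Rightarrow> 'a set \<Rightarrow> 'a \<Rightarrow> 'a \<Rightarrow> 'a \<Rightarrow> bool" where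
  "is_lubL G M x y z \<longleftrightarrow> z \<in> carrier G \<and> leL G M x z \<and> leL G M y z
     \<and> (\<forall>w\<in>carrier G. leL G M x w \<and> leL G M y w \<longrightarrow> leL G M z w)"

definition meetL :: "('a, 'b) monoid_scheme \<Rightarrow> 'a set \<Rightarrow> 'a \<Rightarrow> 'a \<Rightarrow> 'a" where
  "meetL G M x y = (THE z. is_glbL G M x y z)"

definition lattice_L :: "('a, 'b) monoid_scheme \<Rightarrow> 'a set \<Rightarrow> bool" where
  "lattice_L G M \<longleftrightarrow> (\<forall>x\<in>carrier G. \<forall>y\<in>carrier G.
      (\<exists>z. is_glbL G M x y z) \<and> (\<exists>z. is_lubL G M x y z))"

definition garside_structure :: "('a, 'b) monoid_scheme \<Rightarrow> 'a set \<Rightarrow> 'a \<Rightarrow> bool" where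
  "garside_structure G M \<Delta> \<longleftrightarrow> group G \<and> pointed_submonoid G M
     \<and> balanced G M \<Delta> \<and> noetherian G M \<and> finite (Div G M \<Delta>)
     \<and> mgenerate G (Div G M \<Delta>) = M \<and> generate G (Div G M \<Delta>) = carrier G
     \<and> lattice_L G M"

definition parabolic_substructure ::
  "('a, 'b) monoid_scheme \<Rightarrow> 'a set \<Rightarrow> 'a \<Rightarrow> 'a set \<Rightarrow> 'a set \<Rightarrow> 'a \<Rightarrow> bool" where
  "parabolic_substructure G M \<Delta> H N \<delta> \<longleftrightarrow> balanced G M \<delta>
     \<and> H = generate G (Div G M \<delta>) \<and> N = mgenerate G (Div G M \<delta>)
     \<and> Div G M \<delta> = Div G M \<Delta> \<inter> N \<and> H \<noteq> {\<one>\<^bsub>G\<^esub>}"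

definition unmovable :: "('a, 'b) monoid_scheme \<Rightarrow> 'a set \<Rightarrow> 'a \<Rightarrow> 'a \<Rightarrow> bool" where
  "unmovable G M \<Delta> a \<longleftrightarrow> a \<in> M \<and> \<not> leL G M \<Delta> a"

definition right_Delta_form ::
  "('a, 'b) monoid_scheme \<Rightarrow> 'a set \<Rightarrow> 'a \<Rightarrow> 'a \<Rightarrow> 'a \<Rightarrow> int \<Rightarrow> bool" where
  "right_Delta_form G M \<Delta> \<alpha> a p \<longleftrightarrow> unmovable G M \<Delta> a \<and> \<alpha> = a \<otimes>\<^bsub>G\<^esub> (\<Delta> [^]\<^bsub>G\<^esub> p)"

definition right_delta_form ::
  "('a, 'b) monoid_scheme \<Rightarrow> 'a set \<Rightarrow> 'a set \<Rightarrow> 'a \<Rightarrow> 'a \<Rightarrow> 'a \<Rightarrow> int \<Rightarrow> bool" where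
  "right_delta_form G M N \<delta> \<beta> b q \<longleftrightarrow> b \<in> N \<and> \<not> leL G M \<delta> b \<and> \<beta> = b \<otimes>\<^bsub>G\<^esub> (\<delta> [^]\<^bsub>G\<^esub> q)"

definition N_reduced :: "('a, 'b) monoid_scheme \<Rightarrow> 'a set \<Rightarrow> 'a \<Rightarrow> 'a \<Rightarrow> bool" where
  "N_reduced G M \<delta> a \<longleftrightarrow> a \<in> M \<and> meetL G M a \<delta> = \<one>\<^bsub>G\<^esub>"

definition omega :: "('a, 'b) monoid_scheme \<Rightarrow> 'a \<Rightarrow> 'a \<Rightarrow> 'a" where
  "omega G \<Delta> \<delta> = inv\<^bsub>G\<^esub> \<delta> \<otimes>\<^bsub>G\<^esub> \<Delta>"

definition HN_reduced ::
  "('a, 'b) monoid_scheme \<Rightarrow> 'a set \<Rightarrow> 'a \<Rightarrow> 'a \<Rightarrow> 'a \<Rightarrow> bool" where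
  "HN_reduced G M \<Delta> \<delta> \<alpha> \<longleftrightarrow> \<alpha> \<in> carrier G \<and> (\<exists>a p. right_Delta_form G M \<Delta> \<alpha> a p
      \<and> N_reduced G M \<delta> a \<and> (p = 0 \<or> (p < 0 \<and> \<not> leL G M (omega G \<Delta> \<delta>) a)))"

definition Phi_pow :: "('a, 'b) monoid_scheme \<Rightarrow> 'a \<Rightarrow> int \<Rightarrow> 'a \<Rightarrow> 'a" where
  "Phi_pow G \<Delta> n x = (\<Delta> [^]\<^bsub>G\<^esub> n) \<otimes>\<^bsub>G\<^esub> x \<otimes>\<^bsub>G\<^esub> (\<Delta> [^]\<^bsub>G\<^esub> (- n))"

fun omega_prod :: "('a, 'b) monoid_scheme \<Rightarrow> 'a \<Rightarrow> 'a \<Rightarrow> nat \<Rightarrow> 'a" where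
  "omega_prod G \<Delta> \<delta> 0 = \<one>\<^bsub>G\<^esub>"
| "omega_prod G \<Delta> \<delta> (Suc i) =
     omega_prod G \<Delta> \<delta> i \<otimes>\<^bsub>G\<^esub> Phi_pow G \<Delta> (- int (Suc i) + 1) (omega G \<Delta> \<delta>)"

end

theory Submission
  imports Defs
begin

text \<open>Put \<open>u = \<delta>\<^sup>-\<^sup>k c \<Delta>\<^sup>k\<close>, so that \<open>\<beta>\<theta> = b u \<Delta>\<^sup>-\<^sup>k\<^sup>-\<^sup>p\<close> and
  \<open>b \<omega>\<^sub>1\<cdots>\<omega>\<^sub>k \<Phi>\<^sup>-\<^sup>k(c) = b u\<close>. By induction on \<open>k\<close>, \<open>u \<in> M\<close> and \<open>u \<and> \<delta> = 1\<close>: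
  if \<open>u \<and> \<delta> = 1\<close>, then the meet of \<open>v = \<delta>\<^sup>-\<^sup>1 u \<Delta>\<close> with \<open>\<Delta>\<close> is \<open>\<omega>\<close>, so a common
  divisor of \<open>v\<close> and \<open>\<delta>\<close> divides \<open>\<omega> \<and> \<delta>\<close>, which is trivial because \<open>(H, N, \<delta>)\<close> is parabolic.
  Finally \<open>\<delta> \<not>\<le> b\<close> and \<open>u \<and> \<delta> = 1\<close> give \<open>\<delta> \<not>\<le> b u\<close>, hence \<open>\<Delta> \<not>\<le> b u\<close>.\<close>

text \<open>\<open>leL_coprime G M a d\<close> expresses \<open>a \<and>\<^sub>L d = 1\<close> without referring to the meet.\<close>
definition leL_coprime :: "('a, 'b) monoid_scheme \<Rightarrow> 'a set \<Rightarrow> 'a \<Rightarrow> 'a \<Rightarrow> bool" where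
  "leL_coprime G M x y \<longleftrightarrow> (\<forall>s\<in>M. leL G M s x \<longrightarrow> leL G M s y \<longrightarrow> s = \<one>\<^bsub>G\<^esub>)"

lemma pointed_submonoid_subset: "pointed_submonoid G M \<Longrightarrow> M \<subseteq> carrier G"
  and pointed_submonoid_one: "pointed_submonoid G M \<Longrightarrow> \<one>\<^bsub>G\<^esub> \<in> M"
  and pointed_submonoid_mult:
    "pointed_submonoid G M \<Longrightarrow> x \<in> M \<Longrightarrow> y \<in> M \<Longrightarrow> x \<otimes>\<^bsub>G\<^esub> y \<in> M"
  by (simp_all add: pointed_submonoid_def)

lemma pointed_submonoid_inv_eq_one:
  "pointed_submonoid G M \<Longrightarrow> x \<in> M \<Longrightarrow> inv\<^bsub>G\<^esub> x \<in> M \<Longrightarrow> x = \<one>\<^bsub>G\<^esub>"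
  unfolding pointed_submonoid_def by blast

context group
begin

lemma inv_mult_cancel_left [simp]:
  "x \<in> carrier G \<Longrightarrow> y \<in> carrier G \<Longrightarrow> inv x \<otimes> (x \<otimes> y) = y"
  and mult_inv_cancel_left [simp]:
  "x \<in> carrier G \<Longrightarrow> y \<in> carrier G \<Longrightarrow> x \<otimes> (inv x \<otimes> y) = y"
  by (simp_all add: m_assoc[symmetric])

lemma leL_trans:
  assumes PM: "pointed_submonoid G M"
    and c: "x \<in> carrier G" "y \<in> carrier G" "z \<in> carrier G"
    and "leL G M x y" "leL G M y z"
  shows "leL G M x z"
proof -
  have "(inv x \<otimes> y) \<otimes> (inv y \<otimes> z) \<in> M"
    using assms pointed_submonoid_mult[OF PM] by (simp add: leL_def)
  then show ?thesis using c by (simp add: leL_def m_assoc)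
qed

lemma leL_antisym:
  assumes PM: "pointed_submonoid G M" and c: "x \<in> carrier G" "y \<in> carrier G"
    and "leL G M x y" "leL G M y x"
  shows "x = y"
proof -
  have "inv x \<otimes> y \<in> M" "inv (inv x \<otimes> y) \<in> M"
    using assms by (simp_all add: leL_def inv_mult_group)
  then have "inv x \<otimes> y = \<one>" by (rule pointed_submonoid_inv_eq_one[OF PM])
  then show ?thesis using c by (metis inv_closed inv_equality inv_inv)
qed

lemma leL_one_imp_eq_one:
  assumes PM: "pointed_submonoid G M" and "s \<in> M" "leL G M s \<one>"
  shows "s = \<one>"
  using assms pointed_submonoid_subset[OF PM]
  by (intro pointed_submonoid_inv_eq_one[OF PM]) (auto simp: leL_def)

lemma meetL_eqI:
  assumes PM: "pointed_submonoid G M" and glb: "is_glbL G M x y z"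
  shows "meetL G M x y = z"
  unfolding meetL_def
proof (rule the_equality)
  fix z' assume "is_glbL G M x y z'"
  with glb show "z' = z" by (auto simp: is_glbL_def intro: leL_antisym[OF PM])
qed (fact glb)

lemma N_reduced_imp_leL_coprime:
  assumes PM: "pointed_submonoid G M" and glb: "is_glbL G M a d z"
    and red: "N_reduced G M d a"
  shows "leL_coprime G M a d"
proof -
  have "z = \<one>" using meetL_eqI[OF PM glb] red by (simp add: N_reduced_def)
  then show ?thesis
    using glb pointed_submonoid_subset[OF PM]
    by (auto simp: leL_coprime_def is_glbL_def intro: leL_one_imp_eq_one[OF PM])
qed

lemma mgenerate_hom_into:
  assumes PM: "pointed_submonoid G M" and S: "S \<subseteq> carrier G"
    and one: "f \<one> = \<one>"
    and hom: "\<And>x y. x \<in> carrier G \<Longrightarrow> y \<in> carrier G \<Longrightarrow> f (x \<otimes> y) = f x \<otimes> f y"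
    and gen: "\<And>s. s \<in> S \<Longrightarrow> f s \<in> M"
    and x: "x \<in> mgenerate G S"
  shows "f x \<in> M"
proof -
  from x have "x \<in> carrier G \<and> f x \<in> M"
    by induct (use S one hom gen pointed_submonoid_one[OF PM] pointed_submonoid_mult[OF PM] in auto)
  then show ?thesis ..
qed

lemma mgenerate_subset:
  assumes PM: "pointed_submonoid G M" and "S \<subseteq> M"
  shows "mgenerate G S \<subseteq> M"
  using mgenerate_hom_into[OF PM, of S "\<lambda>x. x"] assms pointed_submonoid_subset[OF PM] by blast

lemma balanced_conj_Div:
  assumes PM: "pointed_submonoid G M" and bal: "balanced G M d" and s: "s \<in> Div G M d"
  shows "d \<otimes> s \<otimes> inv d \<in> M" and "inv d \<otimes> s \<otimes> d \<in> M"
proof -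
  have d: "d \<in> carrier G" and sM: "s \<in> M"
    using bal s pointed_submonoid_subset[OF PM] by (auto simp: balanced_def DivL_def)
  have sc: "s \<in> carrier G" using sM pointed_submonoid_subset[OF PM] by auto
  have "inv (d \<otimes> inv s) \<otimes> d = s"
    using sc d by (simp add: inv_mult_group m_assoc)
  moreover have "d \<otimes> inv s \<in> M"
    using s bal by (simp add: balanced_def DivR_def leR_def)
  ultimately have "d \<otimes> inv s \<in> DivL G M d" using sM by (simp add: DivL_def leL_def)
  then have "d \<otimes> inv s \<in> DivR G M d" using bal by (simp add: balanced_def)
  then have "d \<otimes> inv (d \<otimes> inv s) \<in> M" by (simp add: DivR_def leR_def)
  then show "d \<otimes> s \<otimes> inv d \<in> M" using sc d by (simp add: inv_mult_group m_assoc)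
  have "d \<otimes> inv (inv s \<otimes> d) = s"
    using sc d by (simp add: inv_mult_group m_assoc[symmetric])
  moreover have "inv s \<otimes> d \<in> M" using s by (simp add: DivL_def leL_def)
  ultimately have "inv s \<otimes> d \<in> DivR G M d" using sM by (simp add: DivR_def leR_def)
  then have "inv s \<otimes> d \<in> DivL G M d" using bal by (simp add: balanced_def)
  then have "inv (inv s \<otimes> d) \<otimes> d \<in> M" by (simp add: DivL_def leL_def)
  then show "inv d \<otimes> s \<otimes> d \<in> M" using sc d by (simp add: inv_mult_group)
qed

lemma balanced_conj_mgenerate:
  assumes PM: "pointed_submonoid G M" and bal: "balanced G M d"
    and x: "x \<in> mgenerate G (Div G M d)"
  shows "d \<otimes> x \<otimes> inv d \<in> M" and "inv d \<otimes> x \<otimes> d \<in> M"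
proof -
  have d: "d \<in> carrier G" using bal pointed_submonoid_subset[OF PM] by (auto simp: balanced_def)
  have S: "Div G M d \<subseteq> carrier G" using pointed_submonoid_subset[OF PM] by (auto simp: DivL_def)
  show "d \<otimes> x \<otimes> inv d \<in> M"
    by (rule mgenerate_hom_into[OF PM S _ _ balanced_conj_Div(1)[OF PM bal] x])
      (use d in \<open>simp_all add: m_assoc\<close>)
  show "inv d \<otimes> x \<otimes> d \<in> M"
    by (rule mgenerate_hom_into[OF PM S _ _ balanced_conj_Div(2)[OF PM bal] x])
      (use d in \<open>simp_all add: m_assoc\<close>)
qed

lemma glb_exists:
  "lattice_L G M \<Longrightarrow> x \<in> carrier G \<Longrightarrow> y \<in> carrier G \<Longrightarrow> \<exists>z. is_glbL G M x y z"
  by (simp add: lattice_L_def)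

text \<open>The meet of \<open>b a\<close> and \<open>b d\<close> is \<open>b\<close>, since \<open>b\<^sup>-\<^sup>1\<close> times it divides
  both \<open>a\<close> and \<open>d\<close>; as \<open>d\<close> divides \<open>b d\<close>, it cannot also divide \<open>b a\<close>.\<close>
lemma not_leL_mult_leL_coprime:
  assumes PM: "pointed_submonoid G M" and lat: "lattice_L G M"
    and d: "d \<in> M" and b: "b \<in> M" and bconj: "inv d \<otimes> b \<otimes> d \<in> M" and nb: "\<not> leL G M d b"
    and a: "a \<in> M" and ared: "leL_coprime G M a d"
  shows "\<not> leL G M d (b \<otimes> a)"
proof
  assume da: "leL G M d (b \<otimes> a)"
  have dc: "d \<in> carrier G" and bc: "b \<in> carrier G" and ac: "a \<in> carrier G"
    using d b a pointed_submonoid_subset[OF PM] by auto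
  obtain z where "is_glbL G M (b \<otimes> a) (b \<otimes> d) z" using glb_exists[OF lat] bc ac dc by blast
  then have zc: "z \<in> carrier G" and za: "leL G M z (b \<otimes> a)" and zd: "leL G M z (b \<otimes> d)"
    and zmax: "\<And>w. w \<in> carrier G \<Longrightarrow> leL G M w (b \<otimes> a) \<Longrightarrow> leL G M w (b \<otimes> d) \<Longrightarrow> leL G M w z"
    by (auto simp: is_glbL_def)
  have "leL G M d (b \<otimes> d)" using bconj dc bc by (simp add: leL_def m_assoc)
  then have dz: "leL G M d z" using zmax[OF dc da] by simp
  have "leL G M b z" using zmax bc a d ac dc by (simp add: leL_def)
  then have wM: "inv b \<otimes> z \<in> M" by (simp add: leL_def)
  have "leL G M (inv b \<otimes> z) a" "leL G M (inv b \<otimes> z) d"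
    using za zd bc zc ac dc by (simp_all add: leL_def inv_mult_group m_assoc)
  then have "inv b \<otimes> z = \<one>" using ared wM by (simp add: leL_coprime_def)
  then have "z = b" using bc zc by (metis inv_closed inv_equality inv_inv)
  then show False using dz nb by simp
qed

lemma nat_pow_in_submonoid:
  assumes PM: "pointed_submonoid G M" and "D \<in> M"
  shows "D [^] (n::nat) \<in> M"
  by (induction n) (use assms pointed_submonoid_one[OF PM] pointed_submonoid_mult[OF PM] in auto)

lemma omega_prod_eq:
  assumes D: "D \<in> carrier G" and d: "d \<in> carrier G"
  shows "omega_prod G D d k = inv (d [^] k) \<otimes> D [^] k"
proof (induction k)
  case (Suc k)
  have "omega_prod G D d (Suc k)
      = inv (d [^] k) \<otimes> D [^] k \<otimes> (inv (D [^] k) \<otimes> (inv d \<otimes> D) \<otimes> D [^] k)"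
    using Suc D d by (simp add: Phi_pow_def omega_def int_pow_neg_int int_pow_int)
  also have "\<dots> = inv (d \<otimes> d [^] k) \<otimes> (D [^] k \<otimes> D)"
    using D d nat_pow_Suc2[OF D, of k] by (simp add: m_assoc inv_mult_group)
  finally show ?case using nat_pow_Suc2[OF d, of k] by simp
qed simp

lemma omega_prod_Phi_pow_eq:
  assumes D: "D \<in> carrier G" and d: "d \<in> carrier G" and b: "b \<in> carrier G" and c: "c \<in> carrier G"
  shows "b \<otimes> omega_prod G D d k \<otimes> Phi_pow G D (- int k) c
    = b \<otimes> (inv (d [^] k) \<otimes> c \<otimes> D [^] k)"
  using assms by (simp add: omega_prod_eq Phi_pow_def int_pow_neg_int int_pow_int m_assoc)

lemma mult_pow_neg_mult_pow_neg_eq: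
  assumes D: "D \<in> carrier G" and d: "d \<in> carrier G" and b: "b \<in> carrier G" and c: "c \<in> carrier G"
  shows "b \<otimes> d [^] (- int k) \<otimes> (c \<otimes> D [^] (- int p))
    = b \<otimes> (inv (d [^] k) \<otimes> c \<otimes> D [^] k) \<otimes> D [^] (- int k - int p)"
proof -
  have "D [^] (- int k - int p) = inv (D [^] (p + k))"
    using int_pow_neg_int[OF D, of "p + k"] by (simp add: algebra_simps)
  also have "\<dots> = inv (D [^] k) \<otimes> inv (D [^] p)"
    using D by (simp add: nat_pow_mult[symmetric] inv_mult_group)
  finally show ?thesis using assms by (simp add: int_pow_neg_int m_assoc)
qed

end

locale garside = group G for G :: "('a, 'b) monoid_scheme" (structure) +
  fixes M :: "'a set" and \<Delta> :: 'a
  assumes garside: "garside_structure G M \<Delta>"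
begin

lemma pointed: "pointed_submonoid G M"
  and lattice: "lattice_L G M"
  and Delta_mem: "\<Delta> \<in> M"
  using garside by (auto simp: garside_structure_def balanced_def)

lemma M_subset_carrier: "M \<subseteq> carrier G"
  by (rule pointed_submonoid_subset[OF pointed])

lemma Delta_carrier: "\<Delta> \<in> carrier G"
  using Delta_mem M_subset_carrier by auto

lemma conj_Delta_mem: "x \<in> M \<Longrightarrow> \<Delta> \<otimes> x \<otimes> inv \<Delta> \<in> M"
  and conj_inv_Delta_mem: "x \<in> M \<Longrightarrow> inv \<Delta> \<otimes> x \<otimes> \<Delta> \<in> M"
  using balanced_conj_mgenerate[OF pointed, of \<Delta> x] garside
  by (auto simp: garside_structure_def)

lemma unmovable_pow_eq_le:
  assumes x: "unmovable G M \<Delta> x" and y: "unmovable G M \<Delta> y"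
    and eq: "x \<otimes> \<Delta> [^] i = y \<otimes> \<Delta> [^] j" and ij: "i \<le> (j::int)"
  shows "x = y"
proof -
  have xM: "x \<in> M" and yM: "y \<in> M" and nx: "\<not> leL G M \<Delta> x"
    using x y by (auto simp: unmovable_def)
  have xc: "x \<in> carrier G" and yc: "y \<in> carrier G" using xM yM M_subset_carrier by auto
  obtain n where n: "j = int n + i" using ij by (metis add.commute zle_iff_zadd)
  have "x \<otimes> \<Delta> [^] i = (y \<otimes> \<Delta> [^] n) \<otimes> \<Delta> [^] i"
    using eq n Delta_carrier yc by (simp add: int_pow_mult int_pow_int m_assoc)
  then have xe: "x = y \<otimes> \<Delta> [^] n"
    using Delta_carrier xc yc by (metis int_pow_closed m_closed nat_pow_closed right_cancel)
  show ?thesis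
  proof (cases n)
    case 0 then show ?thesis using xe yc by simp
  next
    case (Suc m)
    have "(inv \<Delta> \<otimes> y \<otimes> \<Delta>) \<otimes> \<Delta> [^] m \<in> M"
      using conj_inv_Delta_mem[OF yM] nat_pow_in_submonoid[OF pointed Delta_mem]
        pointed_submonoid_mult[OF pointed] by simp
    then have "leL G M \<Delta> x"
      unfolding xe Suc leL_def using Delta_carrier yc nat_pow_Suc2[OF Delta_carrier, of m]
      by (simp add: m_assoc)
    then show ?thesis using nx by simp
  qed
qed

lemma right_Delta_form_unique:
  assumes "right_Delta_form G M \<Delta> \<alpha> a p" and "right_Delta_form G M \<Delta> \<alpha> a' p'"
  shows "a = a'"
  using assms unmovable_pow_eq_le[of a a' p p'] unmovable_pow_eq_le[of a' a p' p]
  by (cases "p \<le> p'") (auto simp: right_Delta_form_def)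

text \<open>With \<open>\<omega> = d\<^sup>-\<^sup>1 \<Delta>\<close>: conjugating \<open>\<omega>\<^sup>-\<^sup>1 z\<close> back by \<open>\<Delta>\<close> gives a common
  divisor of \<open>u\<close> and \<open>d\<close>.\<close>
lemma glb_conj_Delta_eq:
  assumes d: "d \<in> M" and om: "inv d \<otimes> \<Delta> \<in> M"
    and u: "u \<in> M" and ured: "leL_coprime G M u d"
    and glb: "is_glbL G M (inv d \<otimes> u \<otimes> \<Delta>) \<Delta> z"
  shows "z = inv d \<otimes> \<Delta>"
proof -
  let ?\<omega> = "inv d \<otimes> \<Delta>" and ?v = "inv d \<otimes> u \<otimes> \<Delta>"
  have dc: "d \<in> carrier G" and uc: "u \<in> carrier G" using d u M_subset_carrier by auto
  note Dc = Delta_carrier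
  have zc: "z \<in> carrier G" and zv: "leL G M z ?v" and zD: "leL G M z \<Delta>"
    and zmax: "\<And>w. w \<in> carrier G \<Longrightarrow> leL G M w ?v \<Longrightarrow> leL G M w \<Delta> \<Longrightarrow> leL G M w z"
    using glb by (auto simp: is_glbL_def)
  have "leL G M ?\<omega> ?v" using conj_inv_Delta_mem[OF u] dc Dc uc
    by (simp add: leL_def m_assoc inv_mult_group)
  moreover have "leL G M ?\<omega> \<Delta>" using conj_inv_Delta_mem[OF d] dc Dc
    by (simp add: leL_def m_assoc inv_mult_group)
  ultimately have "inv ?\<omega> \<otimes> z \<in> M" using zmax dc Dc by (simp add: leL_def)
  then have yM: "\<Delta> \<otimes> (inv ?\<omega> \<otimes> z) \<otimes> inv \<Delta> \<in> M" by (rule conj_Delta_mem)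
  have "\<Delta> \<otimes> (inv z \<otimes> ?v) \<otimes> inv \<Delta> \<in> M" using conj_Delta_mem zv by (simp add: leL_def)
  then have "leL G M (\<Delta> \<otimes> (inv ?\<omega> \<otimes> z) \<otimes> inv \<Delta>) u"
    using dc Dc uc zc by (simp add: leL_def m_assoc inv_mult_group)
  moreover have "\<Delta> \<otimes> (inv z \<otimes> \<Delta>) \<otimes> inv \<Delta> \<in> M" using conj_Delta_mem zD by (simp add: leL_def)
  then have "leL G M (\<Delta> \<otimes> (inv ?\<omega> \<otimes> z) \<otimes> inv \<Delta>) d"
    using dc Dc zc by (simp add: leL_def m_assoc inv_mult_group)
  ultimately have "\<Delta> \<otimes> (inv ?\<omega> \<otimes> z) \<otimes> inv \<Delta> = \<one>"
    using ured yM by (simp add: leL_coprime_def)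
  moreover have "inv ?\<omega> \<otimes> z = inv \<Delta> \<otimes> (\<Delta> \<otimes> (inv ?\<omega> \<otimes> z) \<otimes> inv \<Delta>) \<otimes> \<Delta>"
    using dc Dc zc by (simp add: m_assoc)
  ultimately have "inv ?\<omega> \<otimes> z = \<one>" using Dc by simp
  moreover have "z = ?\<omega> \<otimes> (inv ?\<omega> \<otimes> z)" using dc Dc zc by simp
  ultimately show ?thesis using dc Dc by simp
qed

lemma leL_coprime_conj_step:
  assumes d: "d \<in> M" and om: "inv d \<otimes> \<Delta> \<in> M" and omred: "leL_coprime G M (inv d \<otimes> \<Delta>) d"
    and u: "u \<in> M" and ured: "leL_coprime G M u d"
  shows "inv d \<otimes> u \<otimes> \<Delta> \<in> M \<and> leL_coprime G M (inv d \<otimes> u \<otimes> \<Delta>) d"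
proof
  have dc: "d \<in> carrier G" and uc: "u \<in> carrier G" using d u M_subset_carrier by auto
  note Dc = Delta_carrier
  have "(inv d \<otimes> \<Delta>) \<otimes> (inv \<Delta> \<otimes> u \<otimes> \<Delta>) \<in> M"
    using om conj_inv_Delta_mem[OF u] pointed_submonoid_mult[OF pointed] by simp
  then show vM: "inv d \<otimes> u \<otimes> \<Delta> \<in> M" using dc Dc uc by (simp add: m_assoc)
  show "leL_coprime G M (inv d \<otimes> u \<otimes> \<Delta>) d"
    unfolding leL_coprime_def
  proof (intro ballI impI)
    fix s assume sM: "s \<in> M" and sv: "leL G M s (inv d \<otimes> u \<otimes> \<Delta>)" and sd: "leL G M s d"
    have sc: "s \<in> carrier G" using sM M_subset_carrier by auto
    obtain z where glb: "is_glbL G M (inv d \<otimes> u \<otimes> \<Delta>) \<Delta> z"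
      using glb_exists[OF lattice] vM M_subset_carrier Dc by blast
    have "leL G M d \<Delta>" using om by (simp add: leL_def)
    then have "leL G M s \<Delta>" using leL_trans[OF pointed sc dc Dc sd] by simp
    then have "leL G M s z" using glb sv sc by (simp add: is_glbL_def)
    then have "leL G M s (inv d \<otimes> \<Delta>)" using glb_conj_Delta_eq[OF d om u ured glb] by simp
    then show "s = \<one>" using omred sM sd by (simp add: leL_coprime_def)
  qed
qed

lemma leL_coprime_conj_pow:
  assumes d: "d \<in> M" and om: "inv d \<otimes> \<Delta> \<in> M" and omred: "leL_coprime G M (inv d \<otimes> \<Delta>) d"
    and c: "c \<in> M" and cred: "leL_coprime G M c d"
  shows "inv (d [^] (k::nat)) \<otimes> c \<otimes> \<Delta> [^] k \<in> M \<and> leL_coprime G M (inv (d [^] k) \<otimes> c \<otimes> \<Delta> [^] k) d"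
proof (induction k)
  case 0
  then show ?case using c cred M_subset_carrier by auto
next
  case (Suc k)
  have dc: "d \<in> carrier G" and cc: "c \<in> carrier G" using d c M_subset_carrier by auto
  have "inv (d [^] Suc k) \<otimes> c \<otimes> \<Delta> [^] Suc k = inv d \<otimes> (inv (d [^] k) \<otimes> c \<otimes> \<Delta> [^] k) \<otimes> \<Delta>"
    using dc cc Delta_carrier by (simp add: m_assoc inv_mult_group)
  then show ?case using Suc leL_coprime_conj_step[OF d om omred] by simp
qed

context
  fixes H N :: "'a set" and \<delta> :: 'a
  assumes parabolic: "parabolic_substructure G M \<Delta> H N \<delta>"
begin

lemma parabolic_balanced: "balanced G M \<delta>"
  and parabolic_N_eq: "N = mgenerate G (Div G M \<delta>)"
  and parabolic_Div_eq: "Div G M \<delta> = Div G M \<Delta> \<inter> N"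
  using parabolic unfolding parabolic_substructure_def by blast+

lemma parabolic_delta_mem: "\<delta> \<in> M"
  using parabolic_balanced by (simp add: balanced_def)

lemma parabolic_N_subset: "N \<subseteq> M"
  unfolding parabolic_N_eq by (rule mgenerate_subset[OF pointed]) (auto simp: DivL_def)

lemma parabolic_delta_Div: "\<delta> \<in> Div G M \<delta>"
  using parabolic_delta_mem M_subset_carrier pointed_submonoid_one[OF pointed]
  by (auto simp: DivL_def leL_def)

lemma parabolic_omega_mem: "inv \<delta> \<otimes> \<Delta> \<in> M"
  using parabolic_delta_Div unfolding parabolic_Div_eq by (simp add: DivL_def leL_def)

lemma parabolic_conj_inv_delta_mem: "x \<in> N \<Longrightarrow> inv \<delta> \<otimes> x \<otimes> \<delta> \<in> M"
  using balanced_conj_mgenerate(2)[OF pointed parabolic_balanced] parabolic_N_eq by simp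

text \<open>A common divisor \<open>s\<close> of \<omega> and \<delta> lies in \<open>N\<close>, so \<open>\<delta> s\<close> is a divisor of \<Delta> in \<open>N\<close>,
  hence of \<delta>.\<close>
lemma parabolic_omega_leL_coprime: "leL_coprime G M (inv \<delta> \<otimes> \<Delta>) \<delta>"
  unfolding leL_coprime_def
proof (intro ballI impI)
  fix s assume sM: "s \<in> M" and so: "leL G M s (inv \<delta> \<otimes> \<Delta>)" and sd: "leL G M s \<delta>"
  have sc: "s \<in> carrier G" and dc: "\<delta> \<in> carrier G"
    using sM parabolic_delta_mem M_subset_carrier by auto
  have "s \<in> mgenerate G (Div G M \<delta>)" "\<delta> \<in> mgenerate G (Div G M \<delta>)"
    using sM sd parabolic_delta_Div by (auto simp: DivL_def intro: mgenerate.incl)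
  then have "\<delta> \<otimes> s \<in> N" unfolding parabolic_N_eq by (rule mgenerate.mult[rotated])
  moreover have "leL G M (\<delta> \<otimes> s) \<Delta>"
    using so sc dc Delta_carrier by (simp add: leL_def inv_mult_group m_assoc)
  ultimately have "\<delta> \<otimes> s \<in> Div G M \<delta>"
    unfolding parabolic_Div_eq using parabolic_N_subset by (auto simp: DivL_def)
  then have "inv s \<in> M" using sc dc by (simp add: DivL_def leL_def inv_mult_group m_assoc)
  then show "s = \<one>" using pointed_submonoid_inv_eq_one[OF pointed sM] by simp
qed


lemma right_Delta_form_mult:
  assumes \<theta>red: "HN_reduced G M \<Delta> \<delta> \<theta>" and \<theta>form: "right_Delta_form G M \<Delta> \<theta> c (- int p)"
    and \<beta>form: "right_delta_form G M N \<delta> \<beta> b (- int k)"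
  shows "right_Delta_form G M \<Delta> (\<beta> \<otimes> \<theta>)
    (b \<otimes> omega_prod G \<Delta> \<delta> k \<otimes> Phi_pow G \<Delta> (- int k) c) (- int k - int p)"
proof -
  have \<delta>M: "\<delta> \<in> M" and \<delta>c: "\<delta> \<in> carrier G" and \<delta>\<Delta>: "leL G M \<delta> \<Delta>"
    using parabolic_delta_mem parabolic_omega_mem M_subset_carrier
    by (auto simp: leL_def)
  obtain a q where aform: "right_Delta_form G M \<Delta> \<theta> a q" and ared: "N_reduced G M \<delta> a"
    using \<theta>red by (auto simp: HN_reduced_def)
  have "a = c" using right_Delta_form_unique[OF aform \<theta>form] .
  then have cM: "c \<in> M" and cred: "N_reduced G M \<delta> c" using ared by (auto simp: N_reduced_def)
  obtain z where "is_glbL G M c \<delta> z"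
    using glb_exists[OF lattice] cM \<delta>c M_subset_carrier by blast
  then have cred: "leL_coprime G M c \<delta>" using N_reduced_imp_leL_coprime[OF pointed] cred by blast
  have bM: "b \<in> M" and nb: "\<not> leL G M \<delta> b" and beq: "\<beta> = b \<otimes> \<delta> [^] (- int k)"
    and bconj: "inv \<delta> \<otimes> b \<otimes> \<delta> \<in> M"
    using \<beta>form parabolic_N_subset parabolic_conj_inv_delta_mem
    by (auto simp: right_delta_form_def)
  define u where "u = inv (\<delta> [^] k) \<otimes> c \<otimes> \<Delta> [^] k"
  have uM: "u \<in> M" and ured: "leL_coprime G M u \<delta>"
    using leL_coprime_conj_pow[OF \<delta>M parabolic_omega_mem
        parabolic_omega_leL_coprime cM cred, of k]
    by (simp_all add: u_def)
  have bc: "b \<in> carrier G" and cc: "c \<in> carrier G" using bM cM M_subset_carrier by auto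
  have bu: "b \<otimes> u \<in> M" using bM uM pointed_submonoid_mult[OF pointed] by simp
  have "\<not> leL G M \<delta> (b \<otimes> u)"
    by (rule not_leL_mult_leL_coprime[OF pointed lattice \<delta>M bM bconj nb uM ured])
  then have "\<not> leL G M \<Delta> (b \<otimes> u)"
    using leL_trans[OF pointed \<delta>c Delta_carrier, of "b \<otimes> u"] \<delta>\<Delta> bu M_subset_carrier by auto
  moreover have "\<beta> \<otimes> \<theta> = b \<otimes> u \<otimes> \<Delta> [^] (- int k - int p)"
    using \<theta>form beq mult_pow_neg_mult_pow_neg_eq[OF Delta_carrier \<delta>c bc cc, of k p]
    by (simp add: right_Delta_form_def u_def)
  moreover have "b \<otimes> omega_prod G \<Delta> \<delta> k \<otimes> Phi_pow G \<Delta> (- int k) c = b \<otimes> u"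
    unfolding u_def by (rule omega_prod_Phi_pow_eq[OF Delta_carrier \<delta>c bc cc])
  ultimately show ?thesis using bu by (simp add: right_Delta_form_def unmovable_def)
qed


end

end

theorem lemma3p10:
  fixes G :: "('a, 'b) monoid_scheme" and M N H :: "'a set" and \<Delta> \<delta> \<theta> \<beta> b c :: 'a
    and p k :: nat
  assumes gar: "garside_structure G M \<Delta>"
    and par: "parabolic_substructure G M \<Delta> H N \<delta>"
    and thetaT: "HN_reduced G M \<Delta> \<delta> \<theta>"
    and thetanM: "\<theta> \<notin> M"
    and thetaform: "right_Delta_form G M \<Delta> \<theta> c (- int p)"
    and p1: "p \<ge> 1"
    and betaH: "\<beta> \<in> H" and betanN: "\<beta> \<notin> N"
    and betaform: "right_delta_form G M N \<delta> \<beta> b (- int k)"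
    and k1: "k \<ge> 1"
  shows "right_Delta_form G M \<Delta> (\<beta> \<otimes>\<^bsub>G\<^esub> \<theta>)
           (b \<otimes>\<^bsub>G\<^esub> omega_prod G \<Delta> \<delta> k \<otimes>\<^bsub>G\<^esub> Phi_pow G \<Delta> (- int k) c)
           (- int k - int p)"
proof -
  interpret garside G M \<Delta>
    using gar by (simp add: garside_def garside_axioms_def garside_structure_def)
  show ?thesis by (rule right_Delta_form_mult[OF par thetaT thetaform betaform])
qed

end
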